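(* In the setting of the context, assume $\frac{\ln 2}{\phi}-d^2\ge0$ and let $\nu=\sqrt{\frac{\ln 2}{\phi}-d^2}$, with $\nu\le D_{\rm L}$. Then $$\mathbb{P}(\Delta_{\rm sum}\ge0)\ge\begin{cases}1-\dfrac{2\nu^2}{D_{\rm L}^2}, & \nu\le\dfrac{D_{\rm L}}{2},\\[2mm] 2\left(1-\dfrac{\nu}{D_{\rm L}}\right)^2, & \dfrac{D_{\rm L}}{2}<\nu\le D_{\rm L}.\end{cases}$$
   Context: Fix constants $D_{\rm L},d,\phi,\rho,\eta>0$. Two users are located at $(x_1,0,0)$ and $(x_2,0,0)$ with $x_1,x_2$ independent, $x_1$ uniform on $[-D_{\rm L}/2,0]$, $x_2$ uniform on $[0,D_{\rm L}/2]$. Let $z=x_2-x_1$, $P=e^{-\phi(z^2+d^2)}$ (probability that an interference LoS link is present) and $S=\rho\eta/d^2$. Each user's (EDMA) rate is $$R=P\log_2\!\left(1+\frac{S}{\frac{\rho\eta}{z^2+d^2}+1}\right)+(1-P)\log_2(1+S),$$ the EDMA sum rate is $R^{\rm EDMA}=2R$, the TDMA sum rate is $R^{\rm TDMA}=\log_2(1+S)$, and $\Delta_{\rm sum}=R^{\rm EDMA}-R^{\rm TDMA}$ (a random variable through $x_1,x_2$). *)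

theory Defs
  imports "HOL-Probability.Probability"
begin

definition P_los :: "real \<Rightarrow> real \<Rightarrow> real \<Rightarrow> real \<Rightarrow> real" where
  "P_los \<phi> d x1 x2 = exp (- \<phi> * ((x2 - x1)\<^sup>2 + d\<^sup>2))"

definition snr :: "real \<Rightarrow> real \<Rightarrow> real \<Rightarrow> real" where
  "snr \<rho> \<eta> d = \<rho> * \<eta> / d\<^sup>2"

definition rate_user :: "real \<Rightarrow> real \<Rightarrow> real \<Rightarrow> real \<Rightarrow> real \<Rightarrow> real \<Rightarrow> real" where
  "rate_user \<phi> \<rho> \<eta> d x1 x2 =
     (let P = P_los \<phi> d x1 x2; S = snr \<rho> \<eta> d; z = x2 - x1 in
      P * log 2 (1 + S / (\<rho> * \<eta> / (z\<^sup>2 + d\<^sup>2) + 1)) + (1 - P) * log 2 (1 + S))"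

definition R_EDMA :: "real \<Rightarrow> real \<Rightarrow> real \<Rightarrow> real \<Rightarrow> real \<Rightarrow> real \<Rightarrow> real" where
  "R_EDMA \<phi> \<rho> \<eta> d x1 x2 = 2 * rate_user \<phi> \<rho> \<eta> d x1 x2"

definition R_TDMA :: "real \<Rightarrow> real \<Rightarrow> real \<Rightarrow> real" where
  "R_TDMA \<rho> \<eta> d = log 2 (1 + snr \<rho> \<eta> d)"

definition Delta_sum :: "real \<Rightarrow> real \<Rightarrow> real \<Rightarrow> real \<Rightarrow> real \<Rightarrow> real \<Rightarrow> real" where
  "Delta_sum \<phi> \<rho> \<eta> d x1 x2 = R_EDMA \<phi> \<rho> \<eta> d x1 x2 - R_TDMA \<rho> \<eta> d"

definition user_law :: "real \<Rightarrow> (real \<times> real) measure" where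
  "user_law DL = uniform_measure lborel {-DL/2..0} \<Otimes>\<^sub>M uniform_measure lborel {0..DL/2}"

end

theory Submission
  imports Defs
begin

(*
  Once the users are at distance x2 - x1 >= nu, the interference link is present with
  probability P <= 1/2, so Delta_sum = 2 P a + (1 - 2 P) b >= 0, where a, b >= 0 are the
  two logarithmic rates.  Hence P(Delta_sum >= 0) >= P(x2 - x1 >= nu).  By Fubini the
  latter is the average over x1 of the length of the interval of admissible x2, a
  piecewise linear function of x1 whose integral gives the two closed forms.
*)

lemma P_los_le_half:
  assumes "\<phi> > 0" and far: "sqrt (ln 2 / \<phi> - d\<^sup>2) \<le> x2 - x1"
  shows "P_los \<phi> d x1 x2 \<le> 1 / 2"
proof -
  have "ln 2 / \<phi> - d\<^sup>2 \<le> (x2 - x1)\<^sup>2"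
  proof (cases "ln 2 / \<phi> - d\<^sup>2 \<ge> 0")
    case True
    then have "(sqrt (ln 2 / \<phi> - d\<^sup>2))\<^sup>2 \<le> (x2 - x1)\<^sup>2"
      using far by (intro power_mono) auto
    with True show ?thesis by simp
  next
    case False
    then show ?thesis
      using zero_le_power2[of "x2 - x1"] by linarith
  qed
  then have "ln 2 \<le> \<phi> * ((x2 - x1)\<^sup>2 + d\<^sup>2)"
    using \<open>\<phi> > 0\<close> by (simp add: field_simps)
  then have "P_los \<phi> d x1 x2 \<le> exp (- ln 2)"
    unfolding P_los_def by simp
  then show ?thesis
    by (simp add: exp_minus)
qed

lemma Delta_sum_nonneg:
  assumes "\<rho> \<ge> 0" "\<eta> \<ge> 0" and half: "P_los \<phi> d x1 x2 \<le> 1 / 2"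
  shows "Delta_sum \<phi> \<rho> \<eta> d x1 x2 \<ge> 0"
proof -
  define P where "P = P_los \<phi> d x1 x2"
  define S where "S = snr \<rho> \<eta> d"
  define a where "a = log 2 (1 + S / (\<rho> * \<eta> / ((x2 - x1)\<^sup>2 + d\<^sup>2) + 1))"
  define b where "b = log 2 (1 + S)"
  have "S \<ge> 0"
    using assms by (simp add: S_def snr_def)
  moreover have "S / (\<rho> * \<eta> / ((x2 - x1)\<^sup>2 + d\<^sup>2) + 1) \<ge> 0"
    using \<open>S \<ge> 0\<close> assms by (intro divide_nonneg_nonneg add_nonneg_nonneg) auto
  ultimately have "a \<ge> 0" "b \<ge> 0"
    by (simp_all add: a_def b_def)
  have "P \<ge> 0"
    by (simp add: P_def P_los_def)
  have "Delta_sum \<phi> \<rho> \<eta> d x1 x2 = 2 * P * a + (1 - 2 * P) * b"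
    unfolding Delta_sum_def R_EDMA_def R_TDMA_def rate_user_def Let_def a_def b_def P_def S_def
    by (simp add: algebra_simps)
  also have "\<dots> \<ge> 0"
    using \<open>P \<ge> 0\<close> half \<open>a \<ge> 0\<close> \<open>b \<ge> 0\<close> unfolding P_def by simp
  finally show ?thesis .
qed

definition gap_length :: "real \<Rightarrow> real \<Rightarrow> real \<Rightarrow> real" where
  "gap_length h \<nu> x = max 0 (h - max 0 (x + \<nu>))"

lemma gap_length_nonneg [simp]: "gap_length h \<nu> x \<ge> 0"
  by (simp add: gap_length_def)

lemma borel_measurable_gap_length [measurable]: "gap_length h \<nu> \<in> borel_measurable borel"
  unfolding gap_length_def by measurable

lemma emeasure_gap_slice:
  assumes "h \<ge> 0"
  shows "emeasure lborel ({0..h} \<inter> {y. \<nu> \<le> y - x}) = ennreal (gap_length h \<nu> x)"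
proof -
  have "{0..h} \<inter> {y. \<nu> \<le> y - x} = {max 0 (x + \<nu>)..h}" by auto
  then show ?thesis by (simp add: gap_length_def max_def)
qed

lemma has_integral_const_minus_id:
  fixes a b c :: real
  assumes "a \<le> b"
  shows "((\<lambda>x. c - x) has_integral (c * b - b\<^sup>2 / 2) - (c * a - a\<^sup>2 / 2)) {a..b}"
  using assms by (intro fundamental_theorem_of_calculus)
    (auto intro!: derivative_eq_intros simp: has_real_derivative_iff_has_vector_derivative[symmetric])

lemma gap_length_has_integral:
  assumes "0 \<le> \<nu>" "\<nu> \<le> 2 * h"
  shows "(gap_length h \<nu> has_integral (if \<nu> \<le> h then h\<^sup>2 - \<nu>\<^sup>2 / 2 else (2 * h - \<nu>)\<^sup>2 / 2)) {-h..0}"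
proof (cases "\<nu> \<le> h")
  case True
  have "(gap_length h \<nu> has_integral (h - \<nu>) * h) {-h..-\<nu>}"
    using has_integral_const_real[of h "-h" "-\<nu>"] assms True
    by (subst has_integral_cong[where g = "\<lambda>_. h"]) (auto simp: gap_length_def)
  moreover have "(gap_length h \<nu> has_integral
      (h - \<nu>) * 0 - 0\<^sup>2 / 2 - ((h - \<nu>) * (-\<nu>) - (-\<nu>)\<^sup>2 / 2)) {-\<nu>..0}"
    using has_integral_const_minus_id[of "-\<nu>" 0 "h - \<nu>"] assms True
    by (subst has_integral_cong[where g = "\<lambda>x. h - \<nu> - x"]) (auto simp: gap_length_def)
  ultimately have "(gap_length h \<nu> has_integral
      (h - \<nu>) * h + ((h - \<nu>) * 0 - 0\<^sup>2 / 2 - ((h - \<nu>) * (-\<nu>) - (-\<nu>)\<^sup>2 / 2))) {-h..0}"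
    using assms True by (intro has_integral_combine) auto
  then have "(gap_length h \<nu> has_integral h\<^sup>2 - \<nu>\<^sup>2 / 2) {-h..0}"
    by (rule has_integral_eq_rhs) (simp add: power2_eq_square algebra_simps)
  with True show ?thesis by simp
next
  case False
  have "(gap_length h \<nu> has_integral
      (h - \<nu>) * (h - \<nu>) - (h - \<nu>)\<^sup>2 / 2 - ((h - \<nu>) * (-h) - (-h)\<^sup>2 / 2)) {-h..h - \<nu>}"
    using has_integral_const_minus_id[of "-h" "h - \<nu>" "h - \<nu>"] assms False
    by (subst has_integral_cong[where g = "\<lambda>x. h - \<nu> - x"]) (auto simp: gap_length_def)
  moreover have "(gap_length h \<nu> has_integral 0) {h - \<nu>..0}"
    using False by (subst has_integral_cong[where g = "\<lambda>_. 0"]) (auto simp: gap_length_def)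
  ultimately have "(gap_length h \<nu> has_integral
      (h - \<nu>) * (h - \<nu>) - (h - \<nu>)\<^sup>2 / 2 - ((h - \<nu>) * (-h) - (-h)\<^sup>2 / 2) + 0) {-h..0}"
    using assms False by (intro has_integral_combine) auto
  then have "(gap_length h \<nu> has_integral (2 * h - \<nu>)\<^sup>2 / 2) {-h..0}"
    by (rule has_integral_eq_rhs) (simp add: power2_eq_square field_simps)
  with False show ?thesis by simp
qed

lemma space_user_law [simp]: "space (user_law DL) = UNIV"
  by (simp add: user_law_def space_pair_measure)

lemma prob_space_user_law: "DL > 0 \<Longrightarrow> prob_space (user_law DL)"
  unfolding user_law_def by (intro prob_space_pair prob_space_uniform_measure) auto

lemma measure_user_law_gap_ge_integral:
  assumes h: "h > 0" and I: "(gap_length h \<nu> has_integral I) {-h..0}"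
  shows "measure (user_law (2 * h)) {p. \<nu> \<le> snd p - fst p} = I / h\<^sup>2"
proof -
  define U1 where "U1 = uniform_measure lborel {-h..0::real}"
  define U2 where "U2 = uniform_measure lborel {0..h::real}"
  interpret U2: prob_space U2
    unfolding U2_def using h by (intro prob_space_uniform_measure) auto
  have law: "user_law (2 * h) = U1 \<Otimes>\<^sub>M U2"
    unfolding user_law_def U1_def U2_def by simp
  have "{p \<in> space (U1 \<Otimes>\<^sub>M U2). \<nu> \<le> snd p - fst p} \<in> sets (U1 \<Otimes>\<^sub>M U2)"
    unfolding U1_def U2_def by measurable
  then have meas: "{p. \<nu> \<le> snd p - fst p} \<in> sets (U1 \<Otimes>\<^sub>M U2)"
    by (simp add: U1_def U2_def space_pair_measure)
  have slice: "emeasure U2 {y. \<nu> \<le> y - x} = ennreal (gap_length h \<nu> x / h)" for x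
    unfolding U2_def using h by (simp add: emeasure_gap_slice divide_ennreal)
  have "I \<ge> 0"
    using I by (rule has_integral_nonneg) simp
  have "emeasure (user_law (2 * h)) {p. \<nu> \<le> snd p - fst p}
      = (\<integral>\<^sup>+x. ennreal (gap_length h \<nu> x / h) \<partial>U1)"
    unfolding law by (simp add: U2.emeasure_pair_measure_alt[OF meas] slice)
  also have "\<dots> = (\<integral>\<^sup>+x. ennreal (gap_length h \<nu> x / h) * indicator {-h..0} x \<partial>lborel) / ennreal h"
    unfolding U1_def using h by (subst nn_integral_uniform_measure) auto
  also have "(\<integral>\<^sup>+x. ennreal (gap_length h \<nu> x / h) * indicator {-h..0} x \<partial>lborel) = ennreal (I / h)"
    using h by (intro nn_integral_has_integral_lebesgue' has_integral_divide I) auto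
  also have "ennreal (I / h) / ennreal h = ennreal (I / h\<^sup>2)"
    using h \<open>I \<ge> 0\<close> by (simp add: divide_ennreal power2_eq_square)
  finally show ?thesis
    using \<open>I \<ge> 0\<close> by (simp add: measure_def)
qed

lemma measure_user_law_gap_ge:
  assumes "DL > 0" "0 \<le> \<nu>" "\<nu> \<le> DL"
  shows "measure (user_law DL) {p. \<nu> \<le> snd p - fst p}
    = (if \<nu> \<le> DL / 2 then 1 - 2 * \<nu>\<^sup>2 / DL\<^sup>2 else 2 * (1 - \<nu> / DL)\<^sup>2)"
proof -
  define h where "h = DL / 2"
  have "h > 0" "DL = 2 * h" "\<nu> \<le> 2 * h"
    using assms by (auto simp: h_def)
  define I where "I = (if \<nu> \<le> h then h\<^sup>2 - \<nu>\<^sup>2 / 2 else (2 * h - \<nu>)\<^sup>2 / 2)"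
  have "(gap_length h \<nu> has_integral I) {-h..0}"
    unfolding I_def using \<open>0 \<le> \<nu>\<close> \<open>\<nu> \<le> 2 * h\<close> by (rule gap_length_has_integral)
  then have "measure (user_law DL) {p. \<nu> \<le> snd p - fst p} = I / h\<^sup>2"
    unfolding \<open>DL = 2 * h\<close> by (rule measure_user_law_gap_ge_integral[OF \<open>h > 0\<close>])
  also have "\<dots> = (if \<nu> \<le> DL / 2 then 1 - 2 * \<nu>\<^sup>2 / DL\<^sup>2 else 2 * (1 - \<nu> / DL)\<^sup>2)"
    using \<open>h > 0\<close> by (simp add: I_def h_def field_simps power2_eq_square)
  finally show ?thesis .
qed

theorem lemma3:
  fixes DL d \<phi> \<rho> \<eta> :: real
  assumes "DL > 0" "d > 0" "\<phi> > 0" "\<rho> > 0" "\<eta> > 0"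
    and "ln 2 / \<phi> - d\<^sup>2 \<ge> 0"
    and "sqrt (ln 2 / \<phi> - d\<^sup>2) \<le> DL"
  shows "let \<nu> = sqrt (ln 2 / \<phi> - d\<^sup>2);
             M = user_law DL
         in measure M {p \<in> space M. Delta_sum \<phi> \<rho> \<eta> d (fst p) (snd p) \<ge> 0}
            \<ge> (if \<nu> \<le> DL / 2 then 1 - 2 * \<nu>\<^sup>2 / DL\<^sup>2 else 2 * (1 - \<nu> / DL)\<^sup>2)"
proof -
  define \<nu> where "\<nu> = sqrt (ln 2 / \<phi> - d\<^sup>2)"
  define M where "M = user_law DL"
  define A where "A = {p \<in> space M. Delta_sum \<phi> \<rho> \<eta> d (fst p) (snd p) \<ge> 0}"
  interpret prob_space M
    unfolding M_def using \<open>DL > 0\<close> by (rule prob_space_user_law)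
  have "{p. \<nu> \<le> snd p - fst p} \<subseteq> A"
    using assms by (auto simp: A_def M_def \<nu>_def intro!: Delta_sum_nonneg P_los_le_half)
  moreover have "A \<in> sets M"
    unfolding A_def M_def user_law_def Delta_sum_def R_EDMA_def R_TDMA_def rate_user_def
      P_los_def snr_def Let_def
    by measurable
  ultimately have "measure M {p. \<nu> \<le> snd p - fst p} \<le> measure M A"
    by (rule finite_measure_mono)
  moreover have "measure M {p. \<nu> \<le> snd p - fst p}
      = (if \<nu> \<le> DL / 2 then 1 - 2 * \<nu>\<^sup>2 / DL\<^sup>2 else 2 * (1 - \<nu> / DL)\<^sup>2)"
    unfolding M_def \<nu>_def using assms by (intro measure_user_law_gap_ge) auto
  ultimately show ?thesis
    unfolding Let_def \<nu>_def[symmetric] M_def[symmetric] A_def[symmetric] by simp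
qed

end
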